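(* Let the problem, the cone $\mathcal{C}$ and the complexity be as in the context, and assume $n_0\ge1$. Assume $$R=\sup_{k\in\mathbb{N}}\frac{\lambda_{n_{k-1}}}{\lambda_{n_k}}<\infty.$$ Let $\varepsilon,\rho>0$. Then for every $j\in\mathbb{N}$ satisfying $$\Big[\frac{(a+1)^2R^2}{(a-1)^2}+1\Big]\sum_{k=0}^{j}\frac{b^{2(k-j)}}{\lambda_{n_k}^2}<\frac{\rho^2}{\varepsilon^2},$$ one has $\mathrm{comp}(\mathcal{A}(\mathcal{C}),\varepsilon,\rho)\ge n_j$. In particular, $\mathrm{comp}(\mathcal{A}(\mathcal{C}),\varepsilon,\rho)\ge n_{j^*}$, where $j^*$ is the largest such $j$.
   Context: Let $\mathcal{F}$ and $\mathcal{G}$ be separable Hilbert spaces with orthonormal bases $(u_i)_{i\in\mathbb{N}}$ and $(v_i)_{i\in\mathbb{N}}$. Write $f=\sum_i\widehat f_iu_i$ with $\|f\|_{\mathcal{F}}=\|(\widehat f_i)_i\|_{\ell^2}$, and similarly for $\mathcal{G}$. Let $S:\mathcal{F}\to\mathcal{G}$ be the linear operator $S(f)=\sum_i\lambda_i\widehat f_iv_i$, where $\lambda_1\ge\lambda_2\ge\cdots>0$ and $\lambda_i\to0$. Let $\mathcal{B}_\rho=\{f:\|f\|_{\mathcal{F}}\le\rho\}$. For $\mathcal{H}\subseteq\mathcal{F}$, $\mathcal{A}(\mathcal{H})$ is the set of deterministic algorithms $A:\mathcal{H}\times(0,\infty)\to\mathcal{G}$ with $\|S(f)-A(f,\varepsilon)\|_{\mathcal{G}}\le\varepsilon$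 for all $f\in\mathcal{H}$ and all $\varepsilon>0$. Such an algorithm adaptively samples finitely many bounded linear functionals of $f$, and its output depends on $f$ only through those values. Costs are defined as follows: - $\mathrm{cost}(A,f,\varepsilon)$ is the number of functional values used to compute $A(f,\varepsilon)$; - $\mathrm{cost}(A,\mathcal{H},\varepsilon,\rho)=\sup\{\mathrm{cost}(A,f,\varepsilon):f\in\mathcal{H}\cap\mathcal{B}_\rho\}$; - $\mathrm{comp}(\mathcal{A}(\mathcal{H}),\varepsilon,\rho)=\min_{A\in\mathcal{A}(\mathcal{H})}\mathrm{cost}(A,\mathcal{H},\varepsilon,\rho)$. Let $n_0<n_1<\cdots$ be a strictly increasing, unbounded sequence of non-negative integers. For $j\in\mathbb{N}=\{1,2,\dots\}$ let $\sigma_j(f)=\|(\lambda_i\widehat f_i)_{i=n_{j-1}+1}^{n_j}\|_{\ell^2}$. Fix $0<b<1<a$ and let $\mathcal{C}=\{f\in\mathcal{F}:\sigma_{j+r}(f)\le ab^r\sigma_j(f)\ \forall j,r\in\mathbb{N}\}$. *)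

theory Defs
  imports Complex_Main "HOL-Library.Extended_Nat"
begin

text \<open>Elements of F (resp. G) are represented by their coefficient
  sequences w.r.t. the orthonormal basis (u_i) (resp. (v_i)), indexed by i = 1,2,...;
  the unused slot 0 is fixed to 0.\<close>

definition l2sp :: "(nat \<Rightarrow> real) set" where
  "l2sp = {f. f 0 = 0 \<and> summable (\<lambda>i. (f i)^2)}"

definition l2norm :: "(nat \<Rightarrow> real) \<Rightarrow> real" where
  "l2norm f = sqrt (\<Sum>i. (f i)^2)"

definition Sop :: "(nat \<Rightarrow> real) \<Rightarrow> (nat \<Rightarrow> real) \<Rightarrow> (nat \<Rightarrow> real)" where
  "Sop lam f = (\<lambda>i. lam i * f i)"

definition Bset :: "real \<Rightarrow> (nat \<Rightarrow> real) set" where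
  "Bset rho = {f \<in> l2sp. l2norm f \<le> rho}"

definition bounded_lin_functional :: "((nat \<Rightarrow> real) \<Rightarrow> real) \<Rightarrow> bool" where
  "bounded_lin_functional L \<longleftrightarrow>
     (\<forall>f\<in>l2sp. \<forall>g\<in>l2sp. \<forall>c::real.
        L (\<lambda>i. f i + g i) = L f + L g \<and> L (\<lambda>i. c * f i) = c * L f) \<and>
     (\<exists>K. \<forall>f\<in>l2sp. \<bar>L f\<bar> \<le> K * l2norm f)"

text \<open>A deterministic adaptive algorithm: for tolerance e and previously observed
  values ys, nxt e ys is the next functional to sample, stp e ys decides whether
  to stop, and outp e ys is the output (depending on f only through ys).\<close>
record alg =
  nxt :: "real \<Rightarrow> real list \<Rightarrow> (nat \<Rightarrow> real) \<Rightarrow> real"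
  stp :: "real \<Rightarrow> real list \<Rightarrow> bool"
  outp :: "real \<Rightarrow> real list \<Rightarrow> (nat \<Rightarrow> real)"

fun obs :: "alg \<Rightarrow> real \<Rightarrow> (nat \<Rightarrow> real) \<Rightarrow> nat \<Rightarrow> real list" where
  "obs A e f 0 = []"
| "obs A e f (Suc k) = obs A e f k @ [nxt A e (obs A e f k) f]"

definition terminates :: "alg \<Rightarrow> real \<Rightarrow> (nat \<Rightarrow> real) \<Rightarrow> bool" where
  "terminates A e f \<longleftrightarrow> (\<exists>k. stp A e (obs A e f k))"

definition alg_cost :: "alg \<Rightarrow> (nat \<Rightarrow> real) \<Rightarrow> real \<Rightarrow> nat" where
  "alg_cost A f e = (LEAST k. stp A e (obs A e f k))"

definition alg_out :: "alg \<Rightarrow> (nat \<Rightarrow> real) \<Rightarrow> real \<Rightarrow> (nat \<Rightarrow> real)" where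
  "alg_out A f e = outp A e (obs A e f (alg_cost A f e))"

definition admissible :: "(nat \<Rightarrow> real) \<Rightarrow> (nat \<Rightarrow> real) set \<Rightarrow> alg \<Rightarrow> bool" where
  "admissible lam H A \<longleftrightarrow>
     (\<forall>e>0. \<forall>ys. bounded_lin_functional (nxt A e ys)) \<and>
     (\<forall>f\<in>H. \<forall>e>0. terminates A e f \<and> alg_out A f e \<in> l2sp \<and>
        l2norm (\<lambda>i. Sop lam f i - alg_out A f e i) \<le> e)"

definition cost_set :: "alg \<Rightarrow> (nat \<Rightarrow> real) set \<Rightarrow> real \<Rightarrow> real \<Rightarrow> enat" where
  "cost_set A H e rho = (SUP f \<in> H \<inter> Bset rho. enat (alg_cost A f e))"

definition comp :: "(nat \<Rightarrow> real) \<Rightarrow> (nat \<Rightarrow> real) set \<Rightarrow> real \<Rightarrow> real \<Rightarrow> enat" where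
  "comp lam H e rho = (INF A \<in> {A. admissible lam H A}. cost_set A H e rho)"

definition sigma :: "(nat \<Rightarrow> real) \<Rightarrow> (nat \<Rightarrow> nat) \<Rightarrow> nat \<Rightarrow> (nat \<Rightarrow> real) \<Rightarrow> real" where
  "sigma lam n j f = sqrt (\<Sum>i\<in>{n (j - 1) + 1 .. n j}. (lam i * f i)^2)"

definition cone :: "(nat \<Rightarrow> real) \<Rightarrow> (nat \<Rightarrow> nat) \<Rightarrow> real \<Rightarrow> real \<Rightarrow> (nat \<Rightarrow> real) set" where
  "cone lam n a b = {f \<in> l2sp. \<forall>j\<ge>1. \<forall>r\<ge>1.
      sigma lam n (j + r) f \<le> a * b ^ r * sigma lam n j f}"

end

theory Submission
  imports Defs "HOL-Analysis.L2_Norm" "HOL-Library.Indicator_Function"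
begin

text \<open>Fooling argument. Let \<open>K = (a + 1) / (a - 1)\<close> and let \<open>f\<close> carry a single spike at
  each \<open>n l\<close>, \<open>1 \<le> l \<le> j\<close>, sized so that \<open>sigma l f = \<delta> K / b ^ (j - l)\<close> and
  \<open>\<parallel>f\<parallel> = \<rho>\<close>. This geometric profile leaves enough slack in every cone inequality that
  \<open>f \<plusminus> g\<close> stays in the cone whenever \<open>g\<close> is supported on \<open>{1..n j}\<close> with
  \<open>\<parallel>S g\<parallel> \<le> \<delta>\<close>. An algorithm that samples fewer than \<open>n j\<close> functionals at \<open>f\<close> has a
  nonzero such \<open>g\<close> in their common kernel, so it cannot distinguish \<open>f + g\<close> from
  \<open>f - g\<close>, whose solutions are \<open>2 \<delta>\<close> apart; this is impossible once \<open>\<delta> > \<epsilon>\<close>.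

  Admissibility is required on the whole cone, so only \<open>f\<close> itself has to lie in the ball.
  Hence the hypothesis on \<open>j\<close> is needed only in the weaker form
  \<open>K * L2_set (\<lambda>l. 1 / (b ^ (j - l) * lam (n l))) {1..j} < rho / eps\<close>, to which it
  reduces because \<open>R \<ge> 1\<close>.\<close>

definition finsupp :: "(nat \<Rightarrow> real) set" where
  "finsupp = {h. h 0 = 0 \<and> finite {i. h i \<noteq> 0}}"

definition linear_on_finsupp :: "((nat \<Rightarrow> real) \<Rightarrow> real) \<Rightarrow> bool" where
  "linear_on_finsupp L \<longleftrightarrow> (\<forall>f\<in>finsupp. \<forall>g\<in>finsupp. \<forall>c.
     L (\<lambda>i. f i + g i) = L f + L g \<and> L (\<lambda>i. c * f i) = c * L f)"

lemma finsupp_if_supported: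
  "finite I \<Longrightarrow> 0 \<notin> I \<Longrightarrow> (\<And>i. i \<notin> I \<Longrightarrow> h i = 0) \<Longrightarrow> h \<in> finsupp"
  unfolding finsupp_def by (auto intro: finite_subset[of _ I])

lemma finsupp_add: "f \<in> finsupp \<Longrightarrow> g \<in> finsupp \<Longrightarrow> (\<lambda>i. f i + g i) \<in> finsupp"
  unfolding finsupp_def
  by (auto intro: finite_subset[of _ "{i. f i \<noteq> 0} \<union> {i. g i \<noteq> 0}"])

lemma finsupp_scale: "f \<in> finsupp \<Longrightarrow> (\<lambda>i. c * f i) \<in> finsupp"
  unfolding finsupp_def by (auto intro: finite_subset[of _ "{i. f i \<noteq> 0}"])

lemma finsupp_subset_l2sp: "finsupp \<subseteq> l2sp"
  unfolding finsupp_def l2sp_def by (auto intro!: summable_finite[of "{i. _ i \<noteq> 0}"])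

lemma bounded_lin_functional_imp_linear_on_finsupp:
  "bounded_lin_functional L \<Longrightarrow> linear_on_finsupp L"
  unfolding bounded_lin_functional_def linear_on_finsupp_def using finsupp_subset_l2sp by blast

lemma linear_on_finsupp_add:
  "linear_on_finsupp L \<Longrightarrow> f \<in> finsupp \<Longrightarrow> g \<in> finsupp \<Longrightarrow> L (\<lambda>i. f i + g i) = L f + L g"
  unfolding linear_on_finsupp_def by blast

lemma linear_on_finsupp_scale:
  "linear_on_finsupp L \<Longrightarrow> f \<in> finsupp \<Longrightarrow> L (\<lambda>i. c * f i) = c * L f"
  unfolding linear_on_finsupp_def by blast

lemma linear_on_finsupp_expansion:
  assumes L: "linear_on_finsupp L" and "finite I" "0 \<notin> I" and "\<And>i. i \<notin> I \<Longrightarrow> h i = 0"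
  shows "L h = (\<Sum>i\<in>I. h i * L (indicator {i}))"
  using assms(2-)
proof (induction I arbitrary: h rule: finite_induct)
  case empty
  have "(\<lambda>_. 0::real) \<in> finsupp" by (simp add: finsupp_def)
  from linear_on_finsupp_scale[OF L this, of 0] empty.prems(2) show ?case
    by (simp add: fun_eq_iff)
next
  case (insert x I)
  define e :: "nat \<Rightarrow> real" where "e = indicator {x}"
  define h' where "h' = h(x := 0)"
  have e: "e \<in> finsupp"
    using insert.prems by (intro finsupp_if_supported[of "{x}"]) (auto simp: e_def)
  have h'_supp: "h' i = 0" if "i \<notin> I" for i
    using insert.prems(2) that by (simp add: h'_def)
  have h': "h' \<in> finsupp"
    using insert.hyps(1) insert.prems(1) h'_supp by (intro finsupp_if_supported[of I]) auto
  have "h = (\<lambda>i. h' i + h x * e i)" by (auto simp: h'_def e_def)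
  then have "L h = L (\<lambda>i. h' i + h x * e i)" by (rule arg_cong)
  also have "\<dots> = L h' + h x * L e"
    using linear_on_finsupp_add[OF L h' finsupp_scale[OF e]] linear_on_finsupp_scale[OF L e]
    by simp
  also have "L h' = (\<Sum>i\<in>I. h' i * L (indicator {i}))"
    using insert.IH[of h'] insert.prems(1) h'_supp by simp
  also have "\<dots> = (\<Sum>i\<in>I. h i * L (indicator {i}))"
    using insert.hyps(2) by (intro sum.cong) (auto simp: h'_def)
  finally show ?case using insert.hyps by (simp add: e_def)
qed

lemma linear_on_finsupp_kernel_projection:
  assumes L: "linear_on_finsupp L" and e: "e \<in> finsupp" and "L e \<noteq> 0"
  defines "P \<equiv> \<lambda>h i. h i + - (L h / L e) * e i"
  shows "\<And>h. h \<in> finsupp \<Longrightarrow> L (P h) = 0"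
    and "\<And>M. linear_on_finsupp M \<Longrightarrow> linear_on_finsupp (\<lambda>h. M (P h))"
proof -
  have P: "P h \<in> finsupp" if "h \<in> finsupp" for h
    unfolding P_def by (intro finsupp_add finsupp_scale that e)
  show "L (P h) = 0" if "h \<in> finsupp" for h
  proof -
    have "L (P h) = L h + (- (L h / L e)) * L e"
      unfolding P_def
      by (simp only: linear_on_finsupp_add[OF L that finsupp_scale[OF e]]
          linear_on_finsupp_scale[OF L e])
    also have "\<dots> = 0" using \<open>L e \<noteq> 0\<close> by simp
    finally show ?thesis .
  qed
  have P_add: "P (\<lambda>i. f i + g i) = (\<lambda>i. P f i + P g i)" if "f \<in> finsupp" "g \<in> finsupp" for f g
    by (simp add: P_def linear_on_finsupp_add[OF L that] add_divide_distrib algebra_simps)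
  have P_scale: "P (\<lambda>i. c * f i) = (\<lambda>i. c * P f i)" if "f \<in> finsupp" for f c
    by (simp add: P_def linear_on_finsupp_scale[OF L that] algebra_simps)
  show "linear_on_finsupp (\<lambda>h. M (P h))" if "linear_on_finsupp M" for M
    using that P unfolding linear_on_finsupp_def by (simp add: P_add P_scale finsupp_add finsupp_scale)
qed

lemma common_zero_of_linear_on_finsupp:
  "finite I \<Longrightarrow> 0 \<notin> I \<Longrightarrow> length Ls < card I \<Longrightarrow> \<forall>L\<in>set Ls. linear_on_finsupp L \<Longrightarrow>
    \<exists>g. (\<forall>i. i \<notin> I \<longrightarrow> g i = 0) \<and> (\<exists>i. g i \<noteq> 0) \<and> (\<forall>L\<in>set Ls. L g = 0)"
proof (induction "length Ls" arbitrary: Ls I)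
  case (0 Ls I)
  then obtain i0 where "i0 \<in> I" by fastforce
  then show ?case using 0 by (intro exI[of _ "indicator {i0}"]) (auto simp: indicator_def)
next
  case (Suc m Ls I)
  then obtain L Ls' where Ls: "Ls = L # Ls'" and m: "m = length Ls'" by (metis length_Suc_conv)
  have L: "linear_on_finsupp L" using Suc.prems Ls by simp
  show ?case
  proof (cases "\<exists>i0\<in>I. L (indicator {i0}) \<noteq> 0")
    case True
    then obtain i0 where i0: "i0 \<in> I" and d: "L (indicator {i0}) \<noteq> 0" by blast
    define e :: "nat \<Rightarrow> real" where "e = indicator {i0}"
    define P where "P = (\<lambda>h i. h i + - (L h / L e) * e i)"
    have "i0 \<noteq> 0" using Suc.prems(2) i0 by metis
    then have e: "e \<in> finsupp" by (intro finsupp_if_supported[of "{i0}"]) (auto simp: e_def)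
    have "L e \<noteq> 0" using d by (simp add: e_def)
    note proj = linear_on_finsupp_kernel_projection[OF L e this]
    have LP: "L (P h) = 0" if "h \<in> finsupp" for h
      using proj(1)[OF that] by (simp add: P_def)
    have "linear_on_finsupp (\<lambda>h. M (P h))" if "linear_on_finsupp M" for M
      using proj(2)[OF that] by (simp add: P_def)
    then have lin: "\<forall>M\<in>set (map (\<lambda>M h. M (P h)) Ls'). linear_on_finsupp M"
      using Suc.prems Ls by auto
    obtain g where g: "\<forall>i. i \<notin> I - {i0} \<longrightarrow> g i = 0" "\<exists>i. g i \<noteq> 0"
      "\<forall>M\<in>set Ls'. M (P g) = 0"
      using Suc.hyps(1)[of "map (\<lambda>M h. M (P h)) Ls'" "I - {i0}"] Suc.prems Ls m i0 lin
      by (auto simp: less_diff_conv)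
    have "g \<in> finsupp" using g(1) Suc.prems by (intro finsupp_if_supported[of "I - {i0}"]) auto
    moreover obtain i1 where "g i1 \<noteq> 0" using g(2) by blast
    moreover have "i1 \<noteq> i0" using g(1) \<open>g i1 \<noteq> 0\<close> by blast
    ultimately show ?thesis
      using g(1,3) LP Ls i0 by (intro exI[of _ "P g"]) (auto simp: P_def e_def indicator_def)
  next
    case False
    obtain g where g: "\<forall>i. i \<notin> I \<longrightarrow> g i = 0" "\<exists>i. g i \<noteq> 0" "\<forall>M\<in>set Ls'. M g = 0"
      using Suc.hyps(1)[of Ls' I] Suc.prems Ls m by auto
    have "L g = 0"
      using linear_on_finsupp_expansion[OF L, of I g] Suc.prems False g(1) by simp
    then show ?thesis using g Ls by auto
  qed
qed

lemma obs_add_kernel: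
  assumes "\<forall>l<k. linear_on_finsupp (nxt A e (obs A e f l)) \<and> nxt A e (obs A e f l) g = 0"
    and "f \<in> finsupp" "g \<in> finsupp" "l \<le> k"
  shows "obs A e (\<lambda>i. f i + g i) l = obs A e f l"
  using assms(4)
proof (induction l)
  case (Suc l)
  define L where "L = nxt A e (obs A e f l)"
  have L: "linear_on_finsupp L" and "L g = 0" using assms(1) Suc.prems by (auto simp: L_def)
  then have "L (\<lambda>i. f i + g i) = L f" using linear_on_finsupp_add[OF L assms(2,3)] by simp
  then show ?case using Suc by (simp add: L_def)
qed simp

lemma alg_cost_alg_out_eq_if_obs_eq:
  assumes "terminates A e f" and "\<forall>l\<le>alg_cost A f e. obs A e h l = obs A e f l"
  shows "alg_cost A h e = alg_cost A f e" "alg_out A h e = alg_out A f e"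
proof -
  have stop: "stp A e (obs A e f (alg_cost A f e))"
    using assms(1) unfolding terminates_def alg_cost_def by (rule LeastI_ex)
  have "\<not> stp A e (obs A e f l)" if "l < alg_cost A f e" for l
    using that unfolding alg_cost_def by (rule not_less_Least)
  then show cost: "alg_cost A h e = alg_cost A f e"
    using stop assms(2) unfolding alg_cost_def[of A h]
    by (intro Least_equality) (auto, metis le_less_linear less_imp_le)
  show "alg_out A h e = alg_out A f e"
    using assms(2) by (simp add: alg_out_def cost)
qed

lemma admissible_fooling_direction:
  assumes adm: "admissible lam H A" and "e > 0" "f \<in> H" "f \<in> finsupp"
    and cost: "alg_cost A f e < N"
  shows "\<exists>g. (\<forall>i. i \<notin> {1..N} \<longrightarrow> g i = 0) \<and> (\<exists>i. g i \<noteq> 0) \<and>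
    (\<forall>t. alg_out A (\<lambda>i. f i + t * g i) e = alg_out A f e)"
proof -
  define k where "k = alg_cost A f e"
  define Ls where "Ls = map (\<lambda>l. nxt A e (obs A e f l)) [0..<k]"
  have lin: "\<forall>L\<in>set Ls. linear_on_finsupp L"
    using adm \<open>e > 0\<close> unfolding Ls_def admissible_def
    by (auto intro: bounded_lin_functional_imp_linear_on_finsupp)
  obtain g where g: "\<forall>i. i \<notin> {1..N} \<longrightarrow> g i = 0" "\<exists>i. g i \<noteq> 0" "\<forall>L\<in>set Ls. L g = 0"
    using common_zero_of_linear_on_finsupp[of "{1..N}" Ls] lin cost by (auto simp: Ls_def k_def)
  have "g \<in> finsupp" using g(1) by (intro finsupp_if_supported[of "{1..N}"]) auto
  then have tg: "(\<lambda>i. t * g i) \<in> finsupp" for t by (rule finsupp_scale)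
  have kernel: "linear_on_finsupp (nxt A e (obs A e f l)) \<and> nxt A e (obs A e f l) (\<lambda>i. t * g i) = 0"
    if "l < k" for l t
  proof -
    have L: "linear_on_finsupp (nxt A e (obs A e f l))" and "nxt A e (obs A e f l) g = 0"
      using lin g(3) that by (auto simp: Ls_def)
    then show ?thesis using linear_on_finsupp_scale[OF L \<open>g \<in> finsupp\<close>] by simp
  qed
  have "obs A e (\<lambda>i. f i + t * g i) l = obs A e f l" if "l \<le> k" for l t
    using kernel by (intro obs_add_kernel[OF _ \<open>f \<in> finsupp\<close> tg that]) blast
  moreover have "terminates A e f" using adm assms(2,3) unfolding admissible_def by blast
  ultimately have "alg_out A (\<lambda>i. f i + t * g i) e = alg_out A f e" for t
    using alg_cost_alg_out_eq_if_obs_eq(2) unfolding k_def by blast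
  then show ?thesis using g(1,2) by blast
qed

lemma L2_set_uminus: "L2_set (\<lambda>i. - f i) A = L2_set f A"
  unfolding L2_set_def by simp

lemma L2_set_cmult: "L2_set (\<lambda>i. c * f i) A = \<bar>c\<bar> * L2_set f A"
  unfolding L2_set_def by (simp add: power_mult_distrib real_sqrt_mult flip: sum_distrib_left)

lemma L2_set_le_l2norm:
  assumes "summable (\<lambda>i. (d i)\<^sup>2)"
  shows "L2_set d A \<le> l2norm d"
proof (cases "finite A")
  case True
  then show ?thesis
    unfolding l2norm_def L2_set_def by (intro real_sqrt_le_mono sum_le_suminf assms) auto
next
  case False
  then show ?thesis by (simp add: l2norm_def suminf_nonneg assms)
qed

lemma summable_square_diff_finsupp:
  assumes "h \<in> finsupp" "u \<in> l2sp"
  shows "summable (\<lambda>i. (c i * h i - u i)\<^sup>2)"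
proof -
  have "eventually (\<lambda>i. h i = 0) cofinite"
    using assms(1) by (simp add: finsupp_def eventually_cofinite)
  then have "eventually (\<lambda>i. (c i * h i - u i)\<^sup>2 = (u i)\<^sup>2) sequentially"
    unfolding cofinite_eq_sequentially by (rule eventually_mono) simp
  then show ?thesis using assms(2) by (simp add: summable_cong l2sp_def)
qed

lemma admissible_L2_set_error:
  assumes "admissible lam H A" "e > 0" "h \<in> H" "h \<in> finsupp"
  shows "L2_set (\<lambda>i. lam i * h i - alg_out A h e i) I \<le> e"
proof -
  have out: "alg_out A h e \<in> l2sp" and err: "l2norm (\<lambda>i. lam i * h i - alg_out A h e i) \<le> e"
    using assms(1-3) unfolding admissible_def Sop_def by auto
  have "summable (\<lambda>i. (lam i * h i - alg_out A h e i)\<^sup>2)"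
    using assms(4) out by (rule summable_square_diff_finsupp)
  then show ?thesis using err by (rule order_trans[OF L2_set_le_l2norm])
qed

lemma admissible_L2_set_le_if_same_output:
  assumes adm: "admissible lam H A" and "e > 0"
    and H: "(\<lambda>i. f i + g i) \<in> H" "(\<lambda>i. f i - g i) \<in> H"
    and fin: "f \<in> finsupp" "g \<in> finsupp"
    and same: "alg_out A (\<lambda>i. f i + g i) e = alg_out A (\<lambda>i. f i - g i) e"
  shows "L2_set (\<lambda>i. lam i * g i) I \<le> e"
proof -
  define out where "out = alg_out A (\<lambda>i. f i + g i) e"
  have "(\<lambda>i. f i - g i) = (\<lambda>i. f i + (- 1) * g i)" by simp
  then have fin': "(\<lambda>i. f i + g i) \<in> finsupp" "(\<lambda>i. f i - g i) \<in> finsupp"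
    using fin by (simp_all only: finsupp_add finsupp_scale)
  have "2 * L2_set (\<lambda>i. lam i * g i) I
      = L2_set (\<lambda>i. (lam i * (f i + g i) - out i) + - (lam i * (f i - g i) - out i)) I"
    unfolding L2_set_right_distrib[OF zero_le_numeral] by (rule L2_set_cong) (simp_all add: algebra_simps)
  also have "\<dots> \<le> L2_set (\<lambda>i. lam i * (f i + g i) - out i) I
      + L2_set (\<lambda>i. - (lam i * (f i - g i) - out i)) I"
    by (rule L2_set_triangle_ineq)
  also have "\<dots> \<le> e + e"
    using admissible_L2_set_error[OF adm \<open>e > 0\<close> H(1) fin'(1), of I]
      admissible_L2_set_error[OF adm \<open>e > 0\<close> H(2) fin'(2), of I]
    unfolding L2_set_uminus by (simp add: out_def same)
  finally show ?thesis by linarith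
qed

lemma comp_ge_if_fooling_perturbations:
  assumes lam: "\<forall>i\<in>{1..N}. lam i \<noteq> 0" and f: "f \<in> H \<inter> Bset rho" "f \<in> finsupp"
    and "0 < eps" "eps < \<delta>"
    and perturb: "\<And>g. g \<in> finsupp \<Longrightarrow> \<forall>i. i \<notin> {1..N} \<longrightarrow> g i = 0 \<Longrightarrow>
      L2_set (\<lambda>i. lam i * g i) {1..N} = \<delta> \<Longrightarrow> (\<lambda>i. f i + g i) \<in> H"
  shows "enat N \<le> comp lam H eps rho"
  unfolding comp_def
proof (rule INF_greatest)
  fix A assume "A \<in> {A. admissible lam H A}"
  then have adm: "admissible lam H A" by simp
  have "N \<le> alg_cost A f eps"
  proof (rule ccontr)
    assume "\<not> N \<le> alg_cost A f eps"
    then obtain g where supp: "\<forall>i. i \<notin> {1..N} \<longrightarrow> g i = 0" and "\<exists>i. g i \<noteq> 0"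
      and same: "\<And>t. alg_out A (\<lambda>i. f i + t * g i) eps = alg_out A f eps"
      using admissible_fooling_direction[OF adm \<open>0 < eps\<close> _ f(2), of N] f(1) by auto
    define N0 where "N0 = L2_set (\<lambda>i. lam i * g i) {1..N}"
    obtain i where "g i \<noteq> 0" using \<open>\<exists>i. g i \<noteq> 0\<close> by blast
    moreover have "i \<in> {1..N}" using supp calculation by blast
    ultimately have "N0 \<noteq> 0" using lam by (auto simp: N0_def L2_set_eq_0_iff intro!: bexI[of _ i])
    then have "0 < N0" using L2_set_nonneg by (simp add: N0_def order_le_neq_trans)
    define t where "t = \<delta> / N0"
    have "g \<in> finsupp" using supp by (intro finsupp_if_supported[of "{1..N}"]) auto
    then have tg: "(\<lambda>i. s * g i) \<in> finsupp" for s by (rule finsupp_scale)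
    have L2_tg: "L2_set (\<lambda>i. lam i * (s * g i)) {1..N} = \<bar>s\<bar> * N0" for s
      using L2_set_cmult[of s "\<lambda>i. lam i * g i"] by (simp add: N0_def ac_simps)
    have "\<bar>t\<bar> * N0 = \<delta>" "\<bar>- t\<bar> * N0 = \<delta>"
      using \<open>0 < N0\<close> \<open>0 < eps\<close> \<open>eps < \<delta>\<close> by (simp_all add: t_def)
    have H: "(\<lambda>i. f i + s * g i) \<in> H" if "\<bar>s\<bar> * N0 = \<delta>" for s
      using perturb[OF tg] supp L2_tg that by simp
    have "(\<lambda>i. f i + t * g i) \<in> H" "(\<lambda>i. f i - t * g i) \<in> H"
      using H[OF \<open>\<bar>t\<bar> * N0 = \<delta>\<close>] H[OF \<open>\<bar>- t\<bar> * N0 = \<delta>\<close>] by simp_all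
    moreover have "alg_out A (\<lambda>i. f i + t * g i) eps = alg_out A (\<lambda>i. f i - t * g i) eps"
      using same[of t] same[of "- t"] by simp
    ultimately have "L2_set (\<lambda>i. lam i * (t * g i)) {1..N} \<le> eps"
      by (rule admissible_L2_set_le_if_same_output[OF adm \<open>0 < eps\<close> _ _ f(2) tg])
    then show False using L2_tg[of t] \<open>\<bar>t\<bar> * N0 = \<delta>\<close> \<open>eps < \<delta>\<close> by simp
  qed
  then show "enat N \<le> cost_set A H eps rho"
    unfolding cost_set_def using f(1) by (auto intro: SUP_upper2)
qed

abbreviation block :: "(nat \<Rightarrow> nat) \<Rightarrow> nat \<Rightarrow> nat set" where
  "block n m \<equiv> {n (m - 1) + 1..n m}"

lemma sigma_eq_L2_set: "sigma lam n m h = L2_set (\<lambda>i. lam i * h i) (block n m)"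
  by (simp add: sigma_def L2_set_def)

lemma L2_set_le_L2_set_support:
  assumes "finite B" "\<And>i. i \<notin> B \<Longrightarrow> u i = 0"
  shows "L2_set u A \<le> L2_set u B"
proof (cases "finite A")
  case True
  have "(\<Sum>i\<in>A. (u i)\<^sup>2) = (\<Sum>i\<in>A \<inter> B. (u i)\<^sup>2)"
    using True assms(2) by (intro sum.mono_neutral_right) auto
  also have "\<dots> \<le> (\<Sum>i\<in>B. (u i)\<^sup>2)" using assms(1) by (intro sum_mono2) auto
  finally show ?thesis unfolding L2_set_def by (rule real_sqrt_le_mono)
qed simp

lemma l2norm_eq_L2_set:
  "finite N \<Longrightarrow> (\<And>i. i \<notin> N \<Longrightarrow> h i = 0) \<Longrightarrow> l2norm h = L2_set h N"
  unfolding l2norm_def L2_set_def by (subst suminf_finite[of N]) auto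

lemma sigma_add_le: "sigma lam n m (\<lambda>i. f i + g i) \<le> sigma lam n m f + sigma lam n m g"
  unfolding sigma_eq_L2_set distrib_left by (rule L2_set_triangle_ineq)

lemma sigma_le_sigma_add: "sigma lam n m f \<le> sigma lam n m (\<lambda>i. f i + g i) + sigma lam n m g"
  using sigma_add_le[of lam n m "\<lambda>i. f i + g i" "\<lambda>i. - g i"]
  by (simp add: sigma_eq_L2_set L2_set_uminus)

lemma cone_step_ineq:
  fixes a \<beta> \<delta> x :: real
  assumes "0 < \<beta>" "\<beta> \<le> 1" "1 < a" "0 \<le> \<delta>" and margin: "(a + 1) * \<delta> \<le> (a - 1) * x"
  shows "x + \<delta> \<le> a * \<beta> * (x / \<beta> - \<delta>)"
proof -
  have "a * \<beta> * (x / \<beta> - \<delta>) = a * x - a * \<beta> * \<delta>"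
    using assms(1) by (simp add: field_simps)
  moreover have "a * \<beta> * \<delta> \<le> a * \<delta>"
    using mult_left_le[OF assms(2), of "a * \<delta>"] assms(3,4) by (simp add: ac_simps)
  moreover have "a * \<delta> + \<delta> \<le> a * x - x" using margin by (simp add: algebra_simps)
  ultimately show ?thesis by linarith
qed

lemma cone_perturbation:
  fixes f g :: "nat \<Rightarrow> real"
  assumes "0 < b" "b \<le> 1" "1 < a" "0 \<le> \<delta>" and l2: "(\<lambda>i. f i + g i) \<in> l2sp"
    and sf: "\<And>m. 1 \<le> m \<Longrightarrow> m \<le> j \<Longrightarrow> sigma lam n m f = \<delta> * (a + 1) / (a - 1) / b ^ (j - m)"
    and sf0: "\<And>m. j < m \<Longrightarrow> sigma lam n m f = 0"
    and sg: "\<And>m. 1 \<le> m \<Longrightarrow> sigma lam n m g \<le> \<delta>"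
    and sg0: "\<And>m. j < m \<Longrightarrow> sigma lam n m g = 0"
  shows "(\<lambda>i. f i + g i) \<in> cone lam n a b"
  unfolding cone_def
proof (intro CollectI conjI l2 allI impI)
  fix m r :: nat assume "1 \<le> m" "1 \<le> r"
  let ?h = "\<lambda>i. f i + g i"
  have upper: "sigma lam n (m + r) ?h \<le> sigma lam n (m + r) f + sigma lam n (m + r) g"
    by (rule sigma_add_le)
  have "0 \<le> a * b ^ r * sigma lam n m ?h"
    using assms(1,3) by (intro mult_nonneg_nonneg) (simp_all add: sigma_eq_L2_set)
  show "sigma lam n (m + r) ?h \<le> a * b ^ r * sigma lam n m ?h"
  proof (cases "m + r \<le> j")
    case False
    then show ?thesis using upper sf0 sg0 \<open>0 \<le> a * b ^ r * sigma lam n m ?h\<close> by simp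
  next
    case True
    define x where "x = \<delta> * (a + 1) / (a - 1) / b ^ (j - (m + r))"
    have "b ^ (j - m) = b ^ (j - (m + r)) * b ^ r"
      using True by (simp flip: power_add)
    then have "sigma lam n m f = x / b ^ r"
      using sf[of m] True \<open>1 \<le> m\<close> by (simp add: x_def)
    then have lower: "x / b ^ r - \<delta> \<le> sigma lam n m ?h"
      using sigma_le_sigma_add[of lam n m f g] sg[OF \<open>1 \<le> m\<close>] by linarith
    have p: "0 < b ^ (j - (m + r))" "b ^ (j - (m + r)) \<le> 1"
      using assms(1,2) by (simp_all add: power_le_one)
    have "(a + 1) * \<delta> \<le> (a + 1) * \<delta> / b ^ (j - (m + r))"
      using p assms(3,4) by (simp add: le_divide_eq mult_left_le)
    also have "\<dots> = (a - 1) * x" using assms(3) by (simp add: x_def)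
    finally have "x + \<delta> \<le> a * b ^ r * (x / b ^ r - \<delta>)"
      using assms(1,2) by (intro cone_step_ineq assms(3,4)) (simp_all add: power_le_one)
    also have "\<dots> \<le> a * b ^ r * sigma lam n m ?h"
      using lower assms(1,3) by (intro mult_left_mono) auto
    finally show ?thesis
      using upper sf[of "m + r"] sg[of "m + r"] True \<open>1 \<le> m\<close> by (simp add: x_def)
  qed
qed

lemma L2_set_single:
  assumes "finite B" "p \<in> B"
  shows "L2_set (\<lambda>i. if i = p then v else 0) B = \<bar>v\<bar>"
proof -
  have "(\<Sum>i\<in>B. (if i = p then v else 0)\<^sup>2) = (\<Sum>i\<in>B. if i = p then v\<^sup>2 else 0)"
    by (intro sum.cong) auto
  then show ?thesis using assms by (simp add: L2_set_def)
qed

lemma strict_mono_mem_block_iff: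
  assumes "strict_mono n" "1 \<le> m"
  shows "n l \<in> block n m \<longleftrightarrow> l = m"
proof
  assume "n l \<in> block n m"
  then have "n (m - 1) < n l" "n l \<le> n m" by auto
  then have "m - 1 < l" "l \<le> m"
    by (simp_all only: strict_mono_less[OF assms(1)] strict_mono_less_eq[OF assms(1)])
  then show "l = m" by linarith
next
  assume "l = m"
  moreover have "n (m - 1) < n m" using assms by (simp add: strict_mono_less)
  ultimately show "n l \<in> block n m" by simp
qed

definition spikes :: "(nat \<Rightarrow> nat) \<Rightarrow> nat set \<Rightarrow> (nat \<Rightarrow> real) \<Rightarrow> nat \<Rightarrow> real" where
  "spikes n J c i = (\<Sum>l\<in>J. if i = n l then c l else 0)"

lemma spikes_at: "inj n \<Longrightarrow> finite J \<Longrightarrow> spikes n J c (n m) = (if m \<in> J then c m else 0)"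
  unfolding spikes_def by (simp add: inj_eq)

lemma spikes_outside:
  assumes "i \<notin> n ` J"
  shows "spikes n J c i = 0"
proof -
  have "i \<noteq> n l" if "l \<in> J" for l using assms that by blast
  then show ?thesis unfolding spikes_def by (intro sum.neutral) auto
qed

lemma spikes_finsupp:
  assumes "finite J" "\<And>l. l \<in> J \<Longrightarrow> 0 < n l"
  shows "spikes n J c \<in> finsupp"
proof (rule finsupp_if_supported[of "n ` J"])
  show "0 \<notin> n ` J" using assms(2) by (metis image_iff less_irrefl)
qed (use assms(1) spikes_outside in auto)

lemma l2norm_spikes:
  assumes "inj n" "finite J"
  shows "l2norm (spikes n J c) = L2_set c J"
proof -
  have "l2norm (spikes n J c) = L2_set (spikes n J c) (n ` J)"
    using assms(2) by (intro l2norm_eq_L2_set) (auto intro: spikes_outside)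
  also have "\<dots> = L2_set (\<lambda>l. spikes n J c (n l)) J"
    using assms(1) by (simp add: L2_set_def sum.reindex inj_on_subset)
  also have "\<dots> = L2_set c J"
    using assms by (intro L2_set_cong) (simp_all add: spikes_at)
  finally show ?thesis .
qed

lemma sigma_spikes:
  assumes "strict_mono n" "1 \<le> m" "finite J"
  shows "sigma lam n m (spikes n J c) = (if m \<in> J then \<bar>lam (n m) * c m\<bar> else 0)"
proof -
  define v where "v = spikes n J c (n m)"
  have "n (m - 1) < n m" using assms(1,2) by (simp add: strict_mono_less)
  then have nm: "n m \<in> block n m" by simp
  have "i \<notin> n ` J" if "i \<in> block n m" "i \<noteq> n m" for i
  proof
    assume "i \<in> n ` J"
    then obtain l where "i = n l" by blast
    then show False using that strict_mono_mem_block_iff[OF assms(1,2), of l] by simp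
  qed
  then have "lam i * spikes n J c i = (if i = n m then lam (n m) * v else 0)" if "i \<in> block n m" for i
    using that spikes_outside by (auto simp: v_def)
  then have "sigma lam n m (spikes n J c)
      = L2_set (\<lambda>i. if i = n m then lam (n m) * v else 0) (block n m)"
    unfolding sigma_eq_L2_set by (rule L2_set_cong[OF refl])
  also have "\<dots> = \<bar>lam (n m) * v\<bar>" using nm by (intro L2_set_single) auto
  finally show ?thesis using assms by (simp add: v_def spikes_at strict_mono_on_imp_inj_on)
qed

lemma spikes_perturbation_mem_cone:
  fixes lam :: "nat \<Rightarrow> real" and n :: "nat \<Rightarrow> nat" and a b \<delta> :: real
  assumes lam_pos: "\<forall>i\<ge>1. lam i > 0" and n: "strict_mono n"
    and b: "0 < b" "b \<le> 1" and a: "1 < a" and "0 \<le> \<delta>"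
    and g: "g \<in> finsupp" "\<forall>i. i \<notin> {1..n j} \<longrightarrow> g i = 0"
      "L2_set (\<lambda>i. lam i * g i) {1..n j} \<le> \<delta>"
  shows "(\<lambda>i. spikes n {1..j} (\<lambda>l. \<delta> * (a + 1) / (a - 1) / (b ^ (j - l) * lam (n l))) i + g i)
    \<in> cone lam n a b"
proof (rule cone_perturbation[OF b a \<open>0 \<le> \<delta>\<close>])
  let ?f = "spikes n {1..j} (\<lambda>l. \<delta> * (a + 1) / (a - 1) / (b ^ (j - l) * lam (n l)))"
  have n_ge: "l \<le> n l" for l using n by (rule strict_mono_imp_increasing)
  then have "0 < n l" if "1 \<le> l" for l using that le_trans[of 1 l "n l"] by simp
  then have "?f \<in> finsupp" by (intro spikes_finsupp) auto
  then show "(\<lambda>i. ?f i + g i) \<in> l2sp" using g(1) finsupp_add finsupp_subset_l2sp by blast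
  show "sigma lam n m ?f = \<delta> * (a + 1) / (a - 1) / b ^ (j - m)" if "1 \<le> m" "m \<le> j" for m
  proof -
    have "0 < lam (n m)" using lam_pos n_ge[of m] that(1) by simp
    then show ?thesis using that n a b \<open>0 \<le> \<delta>\<close> by (simp add: sigma_spikes abs_mult)
  qed
  show "sigma lam n m ?f = 0" if "j < m" for m
    using that n by (simp add: sigma_spikes)
  show "sigma lam n m g \<le> \<delta>" if "1 \<le> m" for m
    using L2_set_le_L2_set_support[of "{1..n j}" "\<lambda>i. lam i * g i" "block n m"] g(2,3)
    by (simp add: sigma_eq_L2_set)
  show "sigma lam n m g = 0" if "j < m" for m
  proof -
    have "n j \<le> n (m - 1)" using that by (simp add: strict_mono_less_eq[OF n])
    then show ?thesis using g(2) by (simp add: sigma_eq_L2_set L2_set_0')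
  qed
qed

lemma comp_cone_lower_bound:
  fixes lam :: "nat \<Rightarrow> real" and n :: "nat \<Rightarrow> nat" and a b eps rho :: real
  assumes lam_pos: "\<forall>i\<ge>1. lam i > 0" and n: "strict_mono n"
    and b: "0 < b" "b \<le> 1" and a: "1 < a" and "eps > 0" and "j \<ge> 1"
    and small: "(a + 1) / (a - 1) * L2_set (\<lambda>l. 1 / (b ^ (j - l) * lam (n l))) {1..j} < rho / eps"
  shows "enat (n j) \<le> comp lam (cone lam n a b) eps rho"
proof -
  define K where "K = (a + 1) / (a - 1)"
  define D where "D = L2_set (\<lambda>l. 1 / (b ^ (j - l) * lam (n l))) {1..j}"
  have n_ge: "l \<le> n l" for l using n by (rule strict_mono_imp_increasing)
  have "0 < K" using a by (simp add: K_def)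
  have "0 < lam (n j)" using lam_pos n_ge[of j] \<open>j \<ge> 1\<close> by simp
  then have "D \<noteq> 0" using \<open>j \<ge> 1\<close> b by (auto simp: D_def L2_set_eq_0_iff intro!: bexI[of _ j])
  then have "0 < D" using L2_set_nonneg[of _ "{1..j}"] by (simp add: D_def order_le_neq_trans)
  define \<delta> where "\<delta> = rho / (K * D)"
  have "K * D < rho / eps" using small by (simp add: K_def D_def)
  then have "eps < \<delta>" using \<open>eps > 0\<close> \<open>0 < K\<close> \<open>0 < D\<close> by (simp add: \<delta>_def field_simps)
  then have "0 < \<delta>" using \<open>eps > 0\<close> by simp
  moreover have "0 < K * D" using \<open>0 < K\<close> \<open>0 < D\<close> by simp
  ultimately have "0 < rho" by (simp add: \<delta>_def zero_less_divide_iff)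
  define f where "f = spikes n {1..j} (\<lambda>l. \<delta> * (a + 1) / (a - 1) / (b ^ (j - l) * lam (n l)))"
  have cone: "(\<lambda>i. f i + g i) \<in> cone lam n a b"
    if "g \<in> finsupp" "\<forall>i. i \<notin> {1..n j} \<longrightarrow> g i = 0" "L2_set (\<lambda>i. lam i * g i) {1..n j} \<le> \<delta>" for g
    unfolding f_def using lam_pos n b a \<open>0 < \<delta>\<close> that
    by (intro spikes_perturbation_mem_cone) auto
  have "0 < n l" if "1 \<le> l" for l using n_ge[of l] that by simp
  then have f: "f \<in> finsupp" unfolding f_def by (intro spikes_finsupp) auto
  have "l2norm f = L2_set (\<lambda>l. (\<delta> * K) * (1 / (b ^ (j - l) * lam (n l)))) {1..j}"
    unfolding f_def using strict_mono_on_imp_inj_on[OF n]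
    by (subst l2norm_spikes) (auto simp: K_def intro: L2_set_cong)
  also have "\<dots> = rho"
    unfolding L2_set_cmult using \<open>0 < \<delta>\<close> \<open>0 < rho\<close> \<open>0 < K\<close> \<open>0 < D\<close> by (simp add: D_def \<delta>_def)
  finally have "f \<in> Bset rho" using f finsupp_subset_l2sp by (auto simp: Bset_def)
  moreover have "f \<in> cone lam n a b"
    using cone[of "\<lambda>_. 0"] \<open>0 < \<delta>\<close> by (simp add: finsupp_def L2_set_def)
  ultimately have fH: "f \<in> cone lam n a b \<inter> Bset rho" by simp
  show ?thesis
  proof (rule comp_ge_if_fooling_perturbations[OF _ fH f \<open>eps > 0\<close> \<open>eps < \<delta>\<close>])
    show "\<forall>i\<in>{1..n j}. lam i \<noteq> 0" using lam_pos by auto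
  qed (use cone in simp)
qed

lemma L2_set_bound_of_weighted_sum:
  fixes w :: "nat \<Rightarrow> real" and b K R C :: real
  assumes "0 < b" "0 \<le> K" "1 \<le> R" "0 < C"
    and sum: "(K\<^sup>2 * R\<^sup>2 + 1) * (\<Sum>k=0..j. b powi (2 * (int k - int j)) / (w k)\<^sup>2) < C\<^sup>2"
  shows "K * L2_set (\<lambda>l. 1 / (b ^ (j - l) * w l)) {1..j} < C"
proof -
  define S where "S = (\<Sum>k=0..j. (1 / (b ^ (j - k) * w k))\<^sup>2)"
  have powi_eq: "b powi (2 * (int k - int j)) / (w k)\<^sup>2 = (1 / (b ^ (j - k) * w k))\<^sup>2" if "k \<le> j" for k
  proof -
    have "2 * (int k - int j) = - int (2 * (j - k))" using that by simp
    then have "b powi (2 * (int k - int j)) = inverse ((b ^ (j - k))\<^sup>2)"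
      by (simp only: power_int_minus power_int_of_nat power_even_eq)
    then show ?thesis
      by (simp add: power_mult_distrib divide_inverse inverse_mult_distrib power_inverse)
  qed
  have "(\<Sum>k=0..j. b powi (2 * (int k - int j)) / (w k)\<^sup>2) = S"
    unfolding S_def by (intro sum.cong refl powi_eq) simp
  then have "(K\<^sup>2 * R\<^sup>2 + 1) * S < C\<^sup>2" using sum by simp
  moreover have "K\<^sup>2 * S \<le> (K\<^sup>2 * R\<^sup>2 + 1) * S"
  proof (rule mult_right_mono)
    have "K\<^sup>2 * 1 \<le> K\<^sup>2 * R\<^sup>2" using assms(3) by (intro mult_left_mono one_le_power) auto
    then show "K\<^sup>2 \<le> K\<^sup>2 * R\<^sup>2 + 1" by simp
    show "0 \<le> S" unfolding S_def by (rule sum_nonneg) simp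
  qed
  moreover have "(L2_set (\<lambda>l. 1 / (b ^ (j - l) * w l)) {1..j})\<^sup>2 \<le> S"
    unfolding S_def L2_set_def by (simp add: sum_nonneg sum_mono2)
  then have "(K * L2_set (\<lambda>l. 1 / (b ^ (j - l) * w l)) {1..j})\<^sup>2 \<le> K\<^sup>2 * S"
    unfolding power_mult_distrib by (rule mult_left_mono) simp
  ultimately have "(K * L2_set (\<lambda>l. 1 / (b ^ (j - l) * w l)) {1..j})\<^sup>2 < C\<^sup>2" by linarith
  then show ?thesis by (rule power_less_imp_less_base) (use assms(4) in simp)
qed

lemma block_ratio_Sup_ge_1:
  fixes lam :: "nat \<Rightarrow> real" and n :: "nat \<Rightarrow> nat"
  assumes lam_pos: "\<forall>i\<ge>1. lam i > 0" and lam_mono: "\<forall>i\<ge>1. lam (Suc i) \<le> lam i"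
    and "strict_mono n" "n 0 \<ge> 1" and "bdd_above {lam (n (k - 1)) / lam (n k) | k. k \<ge> 1}"
  shows "1 \<le> Sup {lam (n (k - 1)) / lam (n k) | k. k \<ge> 1}"
proof -
  have "lam k \<le> lam (n 0)" if "n 0 \<le> k" for k
    using that
  proof (induction k rule: dec_induct)
    case (step k)
    then have "lam (Suc k) \<le> lam k" using lam_mono assms(4) by simp
    then show ?case using step.IH by linarith
  qed simp
  moreover have "n 0 \<le> n 1" using strict_mono_less_eq[OF assms(3), of 0 1] by simp
  ultimately have "1 \<le> lam (n 0) / lam (n 1)"
    using lam_pos assms(4) by simp
  also have "\<dots> \<le> Sup {lam (n (k - 1)) / lam (n k) | k. k \<ge> 1}"
    using assms(5) by (intro cSup_upper) (auto intro: exI[of _ 1])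
  finally show ?thesis .
qed

theorem theorem2:
  fixes lam :: "nat \<Rightarrow> real" and n :: "nat \<Rightarrow> nat" and a b eps rho :: real
  assumes lam_pos: "\<forall>i\<ge>1. lam i > 0"
    and lam_mono: "\<forall>i\<ge>1. lam (Suc i) \<le> lam i"
    and lam_lim: "lam \<longlonglongrightarrow> 0"
    and n_mono: "strict_mono n"
    and n0: "n 0 \<ge> 1"
    and b: "0 < b" "b < 1" and a: "1 < a"
    and R_fin: "bdd_above {lam (n (k - 1)) / lam (n k) | k. k \<ge> 1}"
    and eps: "eps > 0" and rho: "rho > 0"
  defines "cond \<equiv> (\<lambda>j::nat. ((a + 1)^2 * (Sup {lam (n (k - 1)) / lam (n k) | k. k \<ge> 1})^2 / (a - 1)^2 + 1)
            * (\<Sum>k=0..j. b powi (2 * (int k - int j)) / (lam (n k))^2) < rho^2 / eps^2)"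
  shows "(\<forall>j\<ge>1. cond j \<longrightarrow> enat (n j) \<le> comp lam (cone lam n a b) eps rho) \<and>
         (\<forall>j. (j \<ge> 1 \<and> cond j \<and> (\<forall>j'\<ge>1. cond j' \<longrightarrow> j' \<le> j))
              \<longrightarrow> enat (n j) \<le> comp lam (cone lam n a b) eps rho)"
proof -
  define R where "R = Sup {lam (n (k - 1)) / lam (n k) | k. k \<ge> 1}"
  have "1 \<le> R" unfolding R_def using assms by (intro block_ratio_Sup_ge_1)
  have "enat (n j) \<le> comp lam (cone lam n a b) eps rho" if "j \<ge> 1" "cond j" for j
  proof (rule comp_cone_lower_bound[OF lam_pos n_mono b(1) less_imp_le[OF b(2)] a eps that(1)])
    have "(((a + 1) / (a - 1))\<^sup>2 * R\<^sup>2 + 1) * (\<Sum>k=0..j. b powi (2 * (int k - int j)) / (lam (n k))\<^sup>2)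
        < (rho / eps)\<^sup>2"
      using that(2) by (simp add: cond_def R_def power_divide)
    then show "(a + 1) / (a - 1) * L2_set (\<lambda>l. 1 / (b ^ (j - l) * lam (n l))) {1..j} < rho / eps"
      using a eps rho \<open>1 \<le> R\<close> by (intro L2_set_bound_of_weighted_sum[OF b(1)]) auto
  qed
  then show ?thesis by blast
qed

end
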